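(* Let $\mathbb{F}$ be a field of characteristic $2$. The voltage with respect to $\ell$ of any cycle of length five in $\widetilde H_3(\mathbb{F})$ lies in the $\mathbb{F}_2$-subspace $W^{(2)}\oplus\langle U\rangle$ of $S_2(W)$.
   Context: Let $V=\mathbb{F}^4$, $V^*$ its dual. $\widetilde H_3(\mathbb{F})$ is the graph whose vertices are tensors $v\otimes f\in V\otimes V^*$ with $f(v)\neq0$, with $v\otimes f\perp w\otimes g$ iff $f(w)=g(v)=0$. Let $W=\bigwedge^2V$, fix an isomorphism $\chi:\bigwedge^4V\to\mathbb{F}$, identify $\bigwedge^2V^*$ with $(\bigwedge^2V)^*$ via $(f_1\wedge f_2)(v_1\wedge v_2)=f_1(v_1)f_2(v_2)-f_1(v_2)f_2(v_1)$, let $\psi:\bigwedge^2V\to\bigwedge^2V^*$ be $\psi(\hat w)(\hat v)=\chi(\hat v\wedge\hat w)$ and $\phi=\psi^{-1}$. $S_2(W)$ is the symmetric square of $W$ (product $ab$, $a^2=aa$), and $W^{(2)}=\langle\hat w^2:\hat w\in W\rangle$. $U=(w\wedge x)(y\wedge z)+(w\wedge y)(z\wedge x)+(w\wedge z)(x\wedge y)$ for any $w,x,y,z\in V$ with $\chi(w\wedge x\wedge y\wedge z)=1$ (independent of the choice); $\langle U\rangle$ denotes its $\mathbb{F}_2$-span. $\ell$ assigns to the dart from $v_1\otimes h_1$ to $v_2\otimes h_2$ the element $h_1(v_1)^{-1}h_2(v_2)^{-1}(v_1\wedge v_2)\,\phi(h_1\wedge h_2)$ of $S_2(W)$; the voltage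 of a cycle is the sum of the voltages of its darts. *)

theory Defs
  imports "HOL-Analysis.Analysis"
begin

text \<open>Coordinate model.  V = F^4 is \<open>'a^4\<close>; V* is also \<open>'a^4\<close>, with the
  evaluation pairing \<open>ev f v = f(v)\<close>.\<close>

definition ev :: "'a::comm_ring_1 ^ 4 \<Rightarrow> 'a ^ 4 \<Rightarrow> 'a" where
  "ev f v = (\<Sum>i\<in>UNIV. f $ i * v $ i)"

definition tens :: "'a::comm_ring_1 ^ 4 \<Rightarrow> 'a ^ 4 \<Rightarrow> 'a ^ 4 ^ 4" where
  "tens v f = (\<chi> i j. v $ i * f $ j)"

text \<open>Second exterior powers: an element of \<open>\<Lambda>\<^sup>2V\<close> (or \<open>\<Lambda>\<^sup>2V*\<close>) is an alternating
  matrix \<open>A\<close>, representing \<open>\<Sum>\<^sub>i\<^sub><\<^sub>j A_ij e_i\<and>e_j\<close>.\<close>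
definition alt :: "('a::comm_ring_1 ^ 4 ^ 4) set" where
  "alt = {A. (\<forall>i. A $ i $ i = 0) \<and> (\<forall>i j. A $ i $ j = - A $ j $ i)}"

definition wedge2 :: "'a::comm_ring_1 ^ 4 \<Rightarrow> 'a ^ 4 \<Rightarrow> 'a ^ 4 ^ 4" where
  "wedge2 v w = (\<chi> i j. v $ i * w $ j - v $ j * w $ i)"

definition pair2 :: "'a::comm_ring_1 ^ 4 ^ 4 \<Rightarrow> 'a ^ 4 ^ 4 \<Rightarrow> 'a" where
  "pair2 F A = (\<Sum>(i,j)\<in>{(i,j). i < j}. F $ i $ j * A $ i $ j)"

text \<open>Top exterior power \<open>\<Lambda>\<^sup>4V\<close> identified with F via
  \<open>w\<and>x\<and>y\<and>z \<mapsto> det[w,x,y,z]\<close>; the wedge product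
  \<open>\<Lambda>\<^sup>2V \<times> \<Lambda>\<^sup>2V \<rightarrow> \<Lambda>\<^sup>4V\<close> in these coordinates.\<close>
definition top4 :: "'a::comm_ring_1 ^ 4 \<Rightarrow> 'a ^ 4 \<Rightarrow> 'a ^ 4 \<Rightarrow> 'a ^ 4 \<Rightarrow> 'a" where
  "top4 w x y z = det (vector [w, x, y, z] :: 'a ^ 4 ^ 4)"

definition wedge22 :: "'a::comm_ring_1 ^ 4 ^ 4 \<Rightarrow> 'a ^ 4 ^ 4 \<Rightarrow> 'a" where
  "wedge22 A B = (\<Sum>(i,j)\<in>{(i,j). i < j}. \<Sum>(k,l)\<in>{(k,l). k < l}.
      A $ i $ j * B $ k $ l * top4 (axis i 1) (axis j 1) (axis k 1) (axis l 1))"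

text \<open>Every isomorphism \<open>\<chi> : \<Lambda>\<^sup>4V \<rightarrow> F\<close> is \<open>c \<cdot> (the identification above)\<close>
  for a unique \<open>c \<noteq> 0\<close>.  \<open>\<psi>(B)\<close> is the element of \<open>\<Lambda>\<^sup>2V*\<close> whose coordinates are
  \<open>\<psi>(B)(e_i\<and>e_j) = \<chi>((e_i\<and>e_j)\<and>B)\<close>; \<open>\<phi>\<close> is its inverse on \<open>\<Lambda>\<^sup>2\<close>.\<close>
definition psi :: "'a::comm_ring_1 \<Rightarrow> 'a ^ 4 ^ 4 \<Rightarrow> 'a ^ 4 ^ 4" where
  "psi c B = (\<chi> i j. c * wedge22 (wedge2 (axis i 1) (axis j 1)) B)"

definition phi :: "'a::comm_ring_1 \<Rightarrow> 'a ^ 4 ^ 4 \<Rightarrow> 'a ^ 4 ^ 4" where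
  "phi c = the_inv_into alt (psi c)"

text \<open>Symmetric square \<open>S_2(W)\<close>, \<open>W = \<Lambda>\<^sup>2V\<close> with basis \<open>e_p\<close>, \<open>p = (i,j)\<close>, \<open>i<j\<close>.
  An element \<open>\<Sum>\<^sub>p\<^sub>\<le>\<^sub>q s_pq e_p e_q\<close> is stored as the symmetric coefficient function
  \<open>s p q = s q p\<close> (zero outside basis indices), i.e. \<open>S_2(W)\<close> is modelled as the
  space of quadratic polynomials in the coordinates of W (polynomial-ring model
  of the symmetric power, valid in every characteristic).\<close>
definition bidx :: "(4 \<times> 4) set" where
  "bidx = {(i,j). i < j}"

definition smul :: "'a::comm_ring_1 ^ 4 ^ 4 \<Rightarrow> 'a ^ 4 ^ 4 \<Rightarrow> (4 \<times> 4) \<Rightarrow> (4 \<times> 4) \<Rightarrow> 'a" where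
  "smul A B = (\<lambda>p q. if p \<in> bidx \<and> q \<in> bidx then
       (if p = q then A $ fst p $ snd p * B $ fst p $ snd p
        else A $ fst p $ snd p * B $ fst q $ snd q + A $ fst q $ snd q * B $ fst p $ snd p)
     else 0)"

definition Wsq :: "((4 \<times> 4) \<Rightarrow> (4 \<times> 4) \<Rightarrow> 'a::comm_ring_1) set" where
  "Wsq = {s. \<exists>(n::nat) (lam::nat \<Rightarrow> 'a) (A::nat \<Rightarrow> 'a ^ 4 ^ 4).
             (\<forall>k<n. A k \<in> alt) \<and> s = (\<lambda>p q. \<Sum>k<n. lam k * smul (A k) (A k) p q)}"

definition Uel :: "'a::comm_ring_1 ^ 4 \<Rightarrow> 'a ^ 4 \<Rightarrow> 'a ^ 4 \<Rightarrow> 'a ^ 4 \<Rightarrow> (4 \<times> 4) \<Rightarrow> (4 \<times> 4) \<Rightarrow> 'a" where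
  "Uel w x y z = (\<lambda>p q. smul (wedge2 w x) (wedge2 y z) p q + smul (wedge2 w y) (wedge2 z x) p q
                       + smul (wedge2 w z) (wedge2 x y) p q)"

definition ell :: "'a::field \<Rightarrow> 'a ^ 4 \<Rightarrow> 'a ^ 4 \<Rightarrow> 'a ^ 4 \<Rightarrow> 'a ^ 4 \<Rightarrow> (4 \<times> 4) \<Rightarrow> (4 \<times> 4) \<Rightarrow> 'a" where
  "ell c v1 h1 v2 h2 = (\<lambda>p q. inverse (ev h1 v1) * inverse (ev h2 v2) *
       smul (wedge2 v1 v2) (phi c (wedge2 h1 h2)) p q)"

end

theory Submission
  imports Defs
begin

(* In characteristic 2 all signs disappear, and a coordinate computation shows that, off the
   diagonal, the voltage of a dart between adjacent vertices v1 (x) h1 and v2 (x) h2 (so that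
   h1(v2) = h2(v1) = 0) is P(v1 (x) h1) + P(v2 (x) h2) + c^-1 u, where the potential P depends on
   a single vertex and u is the 0/1 pattern of the off-diagonal part of U.  Around a closed walk
   every potential occurs twice and cancels, while c^-1 u occurs once per dart; for odd length
   this leaves exactly the off-diagonal part of U, because c * top4 w x y z = 1.  The remainder is
   diagonal, and diagonal elements of S_2(W) are combinations of the squares of basis bivectors,
   hence lie in W^(2). *)

lemma add_self_CHAR_2:
  assumes "CHAR('a::ring_1) = 2"
  shows "x + x = (0::'a)"
  using uminus_CHAR_2[OF assms, of x] by (metis add.right_inverse)

lemma add_self_left_CHAR_2:
  assumes "CHAR('a::ring_1) = 2"
  shows "x + (x + y) = (y::'a)"
  by (simp add: add.assoc[symmetric] add_self_CHAR_2[OF assms])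

lemma of_nat_odd_CHAR_2:
  assumes "CHAR('a::comm_ring_1) = 2" and "odd n"
  shows "of_nat n = (1::'a)"
proof -
  obtain m where "n = 2 * m + 1"
    using assms(2) oddE by blast
  moreover have "(2::'a) = 0"
    using of_nat_CHAR[where 'a='a] assms(1) by simp
  ultimately show ?thesis
    by simp
qed

lemma sum_lessThan_rotate: "(\<Sum>k<n. g (Suc k mod n)) = (\<Sum>k<n. g k)"
proof (cases n)
  case (Suc m)
  have "(\<Sum>k<Suc m. g (Suc k mod Suc m)) = (\<Sum>k<m. g (Suc k)) + g 0"
    by (simp add: sum.lessThan_Suc)
  also have "\<dots> = (\<Sum>k<Suc m. g k)"
    by (simp only: sum.lessThan_Suc_shift add.commute)
  finally show ?thesis
    using Suc by simp
qed simp

lemma exhaust_4_from_0: "(i::4) = 0 \<or> i = 1 \<or> i = 2 \<or> i = 3"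
  using exhaust_4[of i] by auto

lemma cases_4_from_0:
  obtains "(i::4) = 0" | "i = 1" | "i = 2" | "i = 3"
  using exhaust_4_from_0 by blast

lemma UNIV_4_from_0: "(UNIV :: 4 set) = {0, 1, 2, 3}"
  using exhaust_4_from_0 by auto

lemma sum_4_from_0: "sum f (UNIV :: 4 set) = f 0 + f 1 + f 2 + f 3"
  unfolding UNIV_4_from_0 by (simp add: ac_simps)

lemma less_4_iff: "(i::4) < j \<longleftrightarrow> (i, j) \<in> {(0,1), (0,2), (0,3), (1,2), (1,3), (2,3)}"
  using exhaust_4_from_0[of i] exhaust_4_from_0[of j]
  by (elim disjE; simp add: less_bit0_def bit0.Rep_numeral bit0.Rep_0 bit0.Rep_1)

lemma bidx_explicit: "bidx = {(0,1), (0,2), (0,3), (1,2), (1,3), (2,3)}"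
  unfolding bidx_def less_4_iff by auto

lemma bidx_cases:
  assumes "p \<in> bidx"
  obtains "p = (0,1)" | "p = (0,2)" | "p = (0,3)" | "p = (1,2)" | "p = (1,3)" | "p = (2,3)"
  using assms unfolding bidx_explicit by blast

lemma det_4:
  "det (A::'a::comm_ring_1^4^4) =
      A$1$1 * A$2$2 * A$3$3 * A$4$4 + A$1$1 * A$2$3 * A$3$4 * A$4$2 + A$1$1 * A$2$4 * A$3$2 * A$4$3
    + A$1$2 * A$2$1 * A$3$4 * A$4$3 + A$1$2 * A$2$3 * A$3$1 * A$4$4 + A$1$2 * A$2$4 * A$3$3 * A$4$1
    + A$1$3 * A$2$1 * A$3$2 * A$4$4 + A$1$3 * A$2$2 * A$3$4 * A$4$1 + A$1$3 * A$2$4 * A$3$1 * A$4$2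
    + A$1$4 * A$2$1 * A$3$3 * A$4$2 + A$1$4 * A$2$2 * A$3$1 * A$4$3 + A$1$4 * A$2$3 * A$3$2 * A$4$1
    - A$1$1 * A$2$2 * A$3$4 * A$4$3 - A$1$1 * A$2$3 * A$3$2 * A$4$4 - A$1$1 * A$2$4 * A$3$3 * A$4$2
    - A$1$2 * A$2$1 * A$3$3 * A$4$4 - A$1$2 * A$2$3 * A$3$4 * A$4$1 - A$1$2 * A$2$4 * A$3$1 * A$4$3
    - A$1$3 * A$2$1 * A$3$4 * A$4$2 - A$1$3 * A$2$2 * A$3$1 * A$4$4 - A$1$3 * A$2$4 * A$3$2 * A$4$1
    - A$1$4 * A$2$1 * A$3$2 * A$4$3 - A$1$4 * A$2$2 * A$3$3 * A$4$1 - A$1$4 * A$2$3 * A$3$1 * A$4$2"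
proof -
  have f1: "finite {2::4, 3, 4}" "1 \<notin> {2::4, 3, 4}" by auto
  have f2: "finite {3::4, 4}" "2 \<notin> {3::4, 4}" by auto
  have f3: "finite {4::4}" "3 \<notin> {4::4}" by auto
  show ?thesis
    unfolding det_def UNIV_4 sum_over_permutations_insert[OF f1]
      sum_over_permutations_insert[OF f2] sum_over_permutations_insert[OF f3] permutes_sing
    by (simp add: sign_swap_id permutation_swap_id permutation_compose sign_compose sign_id
        swap_id_eq algebra_simps)
qed

lemma top4_explicit:
  "top4 w x y z =
      w$1 * x$2 * y$3 * z$0 + w$1 * x$3 * y$0 * z$2 + w$1 * x$0 * y$2 * z$3
    + w$2 * x$1 * y$0 * z$3 + w$2 * x$3 * y$1 * z$0 + w$2 * x$0 * y$3 * z$1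
    + w$3 * x$1 * y$2 * z$0 + w$3 * x$2 * y$0 * z$1 + w$3 * x$0 * y$1 * z$2
    + w$0 * x$1 * y$3 * z$2 + w$0 * x$2 * y$1 * z$3 + w$0 * x$3 * y$2 * z$1
    - w$1 * x$2 * y$0 * z$3 - w$1 * x$3 * y$2 * z$0 - w$1 * x$0 * y$3 * z$2
    - w$2 * x$1 * y$3 * z$0 - w$2 * x$3 * y$0 * z$1 - w$2 * x$0 * y$1 * z$3
    - w$3 * x$1 * y$0 * z$2 - w$3 * x$2 * y$1 * z$0 - w$3 * x$0 * y$2 * z$1
    - w$0 * x$1 * y$2 * z$3 - w$0 * x$2 * y$3 * z$1 - w$0 * x$3 * y$1 * z$2"
proof -
  have four: "(4::4) = 0" by simp
  show ?thesis by (simp add: top4_def det_4 vector_def four)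
qed

lemma wedge22_explicit:
  "wedge22 A B = - A$0$1 * B$2$3 + A$0$2 * B$1$3 - A$0$3 * B$1$2
                 - A$1$2 * B$0$3 + A$1$3 * B$0$2 - A$2$3 * B$0$1"
  unfolding wedge22_def bidx_def[symmetric] bidx_explicit
  by (simp add: top4_explicit axis_def algebra_simps)

lemma psi_nth:
  "psi c B $ 0 $ 0 = 0" "psi c B $ 1 $ 1 = 0" "psi c B $ 2 $ 2 = 0" "psi c B $ 3 $ 3 = 0"
  "psi c B $ 0 $ 1 = - (c * B$2$3)" "psi c B $ 0 $ 2 = c * B$1$3" "psi c B $ 0 $ 3 = - (c * B$1$2)"
  "psi c B $ 1 $ 2 = - (c * B$0$3)" "psi c B $ 1 $ 3 = c * B$0$2" "psi c B $ 2 $ 3 = - (c * B$0$1)"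
  "psi c B $ 1 $ 0 = c * B$2$3" "psi c B $ 2 $ 0 = - (c * B$1$3)" "psi c B $ 3 $ 0 = c * B$1$2"
  "psi c B $ 2 $ 1 = c * B$0$3" "psi c B $ 3 $ 1 = - (c * B$0$2)" "psi c B $ 3 $ 2 = c * B$0$1"
  by (simp_all add: psi_def wedge22_explicit wedge2_def axis_def)

lemma wedge2_in_alt: "wedge2 v w \<in> alt"
  unfolding alt_def wedge2_def by simp

lemma psi_in_alt: "psi c B \<in> alt"
proof -
  have "psi c B $ i $ i = 0" "psi c B $ i $ j = - psi c B $ j $ i" for i j
    by (cases i rule: cases_4_from_0; cases j rule: cases_4_from_0; simp add: psi_nth)+
  then show ?thesis
    unfolding alt_def by blast
qed

lemma alt_eqI:
  assumes "A \<in> alt" "B \<in> alt" and upper: "\<And>i j. i < j \<Longrightarrow> A $ i $ j = B $ i $ j"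
  shows "A = B"
proof -
  have "A $ i $ j = B $ i $ j" for i j
  proof (cases i j rule: linorder_cases)
    case equal
    have "A $ i $ i = 0" "B $ i $ i = 0"
      using assms(1,2) unfolding alt_def by blast+
    then show ?thesis using equal by simp
  next
    case greater
    have "A $ i $ j = - A $ j $ i" "B $ i $ j = - B $ j $ i"
      using assms(1,2) unfolding alt_def by blast+
    then show ?thesis using upper[OF greater] by simp
  qed (rule upper)
  then show ?thesis
    by (simp add: vec_eq_iff)
qed

lemma psi_inverse_psi:
  fixes c :: "'a::field"
  assumes "B \<in> alt" and "c \<noteq> 0"
  shows "psi (inverse c) (psi c B) = B"
proof (rule alt_eqI[OF psi_in_alt assms(1)])
  show "psi (inverse c) (psi c B) $ i $ j = B $ i $ j" if "i < j" for i j
    using that assms(2) unfolding less_4_iff by (auto simp: psi_nth)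
qed

lemma phi_eq_psi_inverse:
  fixes c :: "'a::field"
  assumes "A \<in> alt" and "c \<noteq> 0"
  shows "phi c A = psi (inverse c) A"
proof -
  have "inj_on (psi c) alt"
    using psi_inverse_psi[OF _ assms(2)] by (metis inj_onI)
  moreover have "psi c (psi (inverse c) A) = A"
    using psi_inverse_psi[of A "inverse c"] assms by simp
  ultimately show ?thesis
    unfolding phi_def by (rule the_inv_into_f_eq[OF _ _ psi_in_alt])
qed

definition idx_set :: "4 \<times> 4 \<Rightarrow> 4 set" where
  "idx_set p = {fst p, snd p}"

(* For complementary p, q the sum over idx_set q would serve equally well: the two differ by
   ev h v, and these contributions cancel in the identity below. *)
definition offdiag_form :: "'a::comm_ring_1 ^ 4 \<Rightarrow> 'a ^ 4 \<Rightarrow> 4 \<times> 4 \<Rightarrow> 4 \<times> 4 \<Rightarrow> 'a" where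
  "offdiag_form v h p q =
     (if idx_set p \<inter> idx_set q = {} then (\<Sum>i\<in>idx_set p. v$i * h$i)
      else (\<Sum>i\<in>idx_set p \<inter> idx_set q. \<Sum>l | l \<notin> idx_set p \<union> idx_set q. v$i * h$l))"

(* The polarisation of M \<mapsto> \<Lambda>\<^sup>2 M on V (x) V*: writing T = offdiag_form, M = v1 (x) h1 and
   N = v2 (x) h2, the bracket is tr N T(M) + tr M T(N) + T(MN) + T(NM) + (tr M tr N + tr MN) u,
   where u = 1 exactly for complementary p, q. *)
lemma smul_wedge2_psi_wedge2:
  fixes d :: "'a::comm_ring_1"
  assumes char: "CHAR('a) = 2" and "p \<in> bidx" "q \<in> bidx" "p \<noteq> q"
  shows "smul (wedge2 v1 v2) (psi d (wedge2 h1 h2)) p q =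
    d * (ev h2 v2 * offdiag_form v1 h1 p q + ev h1 v1 * offdiag_form v2 h2 p q
       + ev h1 v2 * offdiag_form v1 h2 p q + ev h2 v1 * offdiag_form v2 h1 p q
       + (ev h1 v1 * ev h2 v2 + ev h1 v2 * ev h2 v1) * of_bool (idx_set p \<inter> idx_set q = {}))"
  using assms(2-4)
  by (elim bidx_cases; simp add: smul_def bidx_explicit psi_nth wedge2_def ev_def sum_4_from_0
        offdiag_form_def idx_set_def sum.inter_filter[of UNIV, simplified];
      simp only: diff_conv_add_uminus uminus_CHAR_2[OF char];
      simp add: algebra_simps add_self_CHAR_2[OF char] add_self_left_CHAR_2[OF char])

lemma smul_outside_bidx: "p \<notin> bidx \<or> q \<notin> bidx \<Longrightarrow> smul A B p q = 0"
  by (auto simp: smul_def)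

definition vertex_potential :: "'a::field \<Rightarrow> 'a ^ 4 \<Rightarrow> 'a ^ 4 \<Rightarrow> 4 \<times> 4 \<Rightarrow> 4 \<times> 4 \<Rightarrow> 'a" where
  "vertex_potential c v h p q = inverse c * inverse (ev h v) * offdiag_form v h p q"

lemma ell_offdiag_adjacent:
  fixes c :: "'a::field"
  assumes char: "CHAR('a) = 2" and "c \<noteq> 0"
    and "ev h1 v1 \<noteq> 0" "ev h2 v2 \<noteq> 0" and "ev h1 v2 = 0" "ev h2 v1 = 0"
    and "p \<in> bidx" "q \<in> bidx" "p \<noteq> q"
  shows "ell c v1 h1 v2 h2 p q = vertex_potential c v1 h1 p q + vertex_potential c v2 h2 p q
           + inverse c * of_bool (idx_set p \<inter> idx_set q = {})"
  using assms
  by (simp add: ell_def vertex_potential_def phi_eq_psi_inverse wedge2_in_alt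
      smul_wedge2_psi_wedge2 field_simps)

lemma Uel_offdiag:
  assumes char: "CHAR('a::comm_ring_1) = 2" and "p \<in> bidx" "q \<in> bidx" "p \<noteq> q"
  shows "Uel w x y z p q = top4 w x y z * (of_bool (idx_set p \<inter> idx_set q = {}) :: 'a)"
  using assms(2-4)
  by (elim bidx_cases; simp add: Uel_def smul_def bidx_explicit wedge2_def top4_explicit idx_set_def;
      simp only: diff_conv_add_uminus uminus_CHAR_2[OF char];
      simp add: algebra_simps add_self_CHAR_2[OF char] add_self_left_CHAR_2[OF char])

definition basis_bivector :: "4 \<times> 4 \<Rightarrow> 'a::comm_ring_1 ^ 4 ^ 4" where
  "basis_bivector r = wedge2 (axis (fst r) 1) (axis (snd r) 1)"

lemma basis_bivector_nth:
  assumes "p \<in> bidx" "r \<in> bidx"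
  shows "basis_bivector r $ fst p $ snd p = of_bool (p = r)"
  using assms by (elim bidx_cases; simp add: basis_bivector_def wedge2_def axis_def)

lemma smul_basis_bivector_square:
  assumes "r \<in> bidx"
  shows "smul (basis_bivector r) (basis_bivector r) p q = of_bool (p = r \<and> q = r)"
  using assms by (simp add: smul_def basis_bivector_nth)

lemma diagonal_in_Wsq:
  fixes s :: "4 \<times> 4 \<Rightarrow> 4 \<times> 4 \<Rightarrow> 'a::comm_ring_1"
  assumes "\<And>p q. s p q \<noteq> 0 \<Longrightarrow> p = q \<and> p \<in> bidx"
  shows "s \<in> Wsq"
proof -
  have "finite bidx"
    by (simp add: bidx_explicit)
  then obtain g where g: "bij_betw g {..<card bidx} bidx"
    using ex_bij_betw_nat_finite by (metis atLeast0LessThan)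
  define A :: "nat \<Rightarrow> 'a ^ 4 ^ 4" where "A k = basis_bivector (g k)" for k
  have "s = (\<lambda>p q. \<Sum>k<card bidx. s (g k) (g k) * smul (A k) (A k) p q)"
  proof (intro ext)
    fix p q
    have "(\<Sum>k<card bidx. s (g k) (g k) * smul (A k) (A k) p q)
          = (\<Sum>r\<in>bidx. s r r * smul (basis_bivector r) (basis_bivector r) p q)"
      unfolding A_def by (rule sum.reindex_bij_betw[OF g])
    also have "\<dots> = (\<Sum>r\<in>bidx. if p = r \<and> q = r then s r r else 0)"
      by (rule sum.cong) (simp_all add: smul_basis_bivector_square)
    also have "\<dots> = s p q"
    proof (cases "p = q \<and> p \<in> bidx")
      case True
      then show ?thesis
        using \<open>finite bidx\<close> by auto
    next
      case False
      then have "s p q = 0"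
        using assms by blast
      moreover have "(\<Sum>r\<in>bidx. if p = r \<and> q = r then s r r else 0) = 0"
        using False by (intro sum.neutral) auto
      ultimately show ?thesis
        by simp
    qed
    finally show "s p q = (\<Sum>k<card bidx. s (g k) (g k) * smul (A k) (A k) p q)"
      by simp
  qed
  moreover have "\<forall>k<card bidx. A k \<in> alt"
    by (simp add: A_def basis_bivector_def wedge2_in_alt)
  ultimately show ?thesis
    unfolding Wsq_def
    by (intro CollectI exI[of _ "card bidx"] exI[of _ "\<lambda>k. s (g k) (g k)"] exI[of _ A] conjI)
qed

lemma closed_walk_voltage_offdiag:
  fixes c :: "'a::field"
  assumes char: "CHAR('a) = 2" and "c \<noteq> 0"
    and vertices: "\<forall>k<n. ev (f k) (v k) \<noteq> 0"
    and adjacent: "\<forall>k<n. ev (f k) (v (Suc k mod n)) = 0 \<and> ev (f (Suc k mod n)) (v k) = 0"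
    and pq: "p \<in> bidx" "q \<in> bidx" "p \<noteq> q"
  shows "(\<Sum>k<n. ell c (v k) (f k) (v (Suc k mod n)) (f (Suc k mod n)) p q)
           = of_nat n * inverse c * of_bool (idx_set p \<inter> idx_set q = {})"
proof -
  define P where "P k = vertex_potential c (v k) (f k) p q" for k
  define u where "u = inverse c * of_bool (idx_set p \<inter> idx_set q = {})"
  have "(\<Sum>k<n. ell c (v k) (f k) (v (Suc k mod n)) (f (Suc k mod n)) p q)
        = (\<Sum>k<n. P k + P (Suc k mod n) + u)"
  proof (rule sum.cong)
    fix k assume "k \<in> {..<n}"
    then have "k < n" "Suc k mod n < n" by auto
    then show "ell c (v k) (f k) (v (Suc k mod n)) (f (Suc k mod n)) p q = P k + P (Suc k mod n) + u"
      unfolding P_def u_def using vertices adjacent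
      by (intro ell_offdiag_adjacent[OF char \<open>c \<noteq> 0\<close> _ _ _ _ pq]) auto
  qed simp
  also have "\<dots> = (\<Sum>k<n. P k) + (\<Sum>k<n. P k) + of_nat n * u"
    by (simp add: sum.distrib sum_lessThan_rotate)
  also have "\<dots> = of_nat n * u"
    by (simp add: add_self_CHAR_2[OF char])
  finally show ?thesis
    by (simp add: u_def)
qed

theorem odd_closed_walk_voltage_in_Wsq_plus_U:
  fixes c :: "'a::field"
  assumes char: "CHAR('a) = 2" and "c \<noteq> 0" and U_choice: "c * top4 w x y z = 1"
    and "odd n"
    and vertices: "\<forall>k<n. ev (f k) (v k) \<noteq> 0"
    and adjacent: "\<forall>k<n. ev (f k) (v (Suc k mod n)) = 0 \<and> ev (f (Suc k mod n)) (v k) = 0"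
  shows "\<exists>s\<in>Wsq. (\<lambda>p q. \<Sum>k<n. ell c (v k) (f k) (v (Suc k mod n)) (f (Suc k mod n)) p q)
                  = (\<lambda>p q. s p q + Uel w x y z p q)"
proof
  define L where "L p q = (\<Sum>k<n. ell c (v k) (f k) (v (Suc k mod n)) (f (Suc k mod n)) p q)" for p q
  define s where "s p q = L p q - Uel w x y z p q" for p q
  have offdiag: "L p q = Uel w x y z p q" if pq: "p \<in> bidx" "q \<in> bidx" "p \<noteq> q" for p q
  proof -
    have "L p q = of_nat n * inverse c * of_bool (idx_set p \<inter> idx_set q = {})"
      unfolding L_def by (rule closed_walk_voltage_offdiag[OF char \<open>c \<noteq> 0\<close> vertices adjacent pq])
    also have "\<dots> = top4 w x y z * of_bool (idx_set p \<inter> idx_set q = {})"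
      using inverse_unique[OF U_choice] of_nat_odd_CHAR_2[OF char \<open>odd n\<close>] by simp
    also have "\<dots> = Uel w x y z p q"
      by (rule Uel_offdiag[OF char pq, symmetric])
    finally show ?thesis .
  qed
  have outside: "L p q = 0" "Uel w x y z p q = 0" if "p \<notin> bidx \<or> q \<notin> bidx" for p q
    using that by (simp_all add: L_def ell_def Uel_def smul_outside_bidx)
  show "s \<in> Wsq"
  proof (rule diagonal_in_Wsq)
    fix p q
    assume nonzero: "s p q \<noteq> 0"
    have "p \<in> bidx \<and> q \<in> bidx"
    proof (rule ccontr)
      assume "\<not> (p \<in> bidx \<and> q \<in> bidx)"
      then have "L p q = 0" "Uel w x y z p q = 0"
        using outside by auto
      with nonzero show False
        by (simp add: s_def)
    qed
    moreover from this have "p = q"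
      using nonzero offdiag[of p q] by (auto simp: s_def)
    ultimately show "p = q \<and> p \<in> bidx"
      by simp
  qed
  show "(\<lambda>p q. \<Sum>k<n. ell c (v k) (f k) (v (Suc k mod n)) (f (Suc k mod n)) p q)
          = (\<lambda>p q. s p q + Uel w x y z p q)"
    by (simp add: s_def L_def)
qed

theorem lemma3p10:
  fixes c :: "'a::field"
    and v f :: "nat \<Rightarrow> 'a ^ 4"
    and w x y z :: "'a ^ 4"
  assumes char2: "CHAR('a) = 2"
    and chi_iso: "c \<noteq> 0"
    and U_choice: "c * top4 w x y z = 1"
    and vertices: "\<forall>k<5. ev (f k) (v k) \<noteq> 0"
    and distinct: "inj_on (\<lambda>k. tens (v k) (f k)) {..<5}"
    and adjacent: "\<forall>k<5. ev (f k) (v (Suc k mod 5)) = 0 \<and> ev (f (Suc k mod 5)) (v k) = 0"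
  shows "\<exists>s\<in>Wsq. \<exists>e\<in>{0, 1::'a}.
           (\<lambda>p q. \<Sum>k<5. ell c (v k) (f k) (v (Suc k mod 5)) (f (Suc k mod 5)) p q)
             = (\<lambda>p q. s p q + e * Uel w x y z p q)"
proof -
  have "odd (5::nat)"
    by simp
  then obtain s where "s \<in> Wsq"
    and "(\<lambda>p q. \<Sum>k<5. ell c (v k) (f k) (v (Suc k mod 5)) (f (Suc k mod 5)) p q)
           = (\<lambda>p q. s p q + Uel w x y z p q)"
    using odd_closed_walk_voltage_in_Wsq_plus_U[OF char2 chi_iso U_choice _ vertices adjacent]
    by blast
  then show ?thesis
    by (intro bexI[of _ s] bexI[of _ 1]) simp_all
qed
end
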